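(* For every $n\in\mathbb{N}$: \begin{align*} \sum_{j=0}^{n}\sum_{i=0}^{j}\frac{\binom{2n+2}{i}}{\binom{2n+1}{j}}&=(n+1)\sum_{k=0}^{n}\frac{1}{2k+1}=(n+1)\Big(H_{2n+1}-\frac{H_n}{2}\Big),\\ \sum_{j=0}^{n}\sum_{i=0}^{j}\frac{\binom{2n+3}{i}}{\binom{2n+1}{j}}&=(n+1)H_{n+1},\\ \sum_{j=0}^{n}\sum_{i=0}^{j}\frac{\binom{2n+1}{i}}{\binom{2n}{j}}&=\frac{2^{2n-1}}{\binom{2n}{n}}+\Big(n+\frac12\Big)\Big(H_{2n+1}-\frac{H_n}{2}\Big),\\ \sum_{j=0}^{n}\sum_{i=0}^{j}\frac{\binom{2n+2}{i}}{\binom{2n}{j}}&=\frac{2^{2n}}{\binom{2n}{n}}+\Big(n+\frac12\Big)H_n. \end{align*}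
   Context: $H_n=\sum_{k=1}^{n}\frac1k$ is the $n$-th harmonic number ($H_0=0$). *)

theory Defs
  imports "HOL-Analysis.Analysis"
begin

end

theory Submission
  imports Defs
begin

text \<open>
  Write \<open>B(m,j) = \<Sum>i\<le>j. C(m,i)\<close>, \<open>x(m,j) = B(m,j) / C(m,j)\<close> and
  \<open>X(m,N) = \<Sum>j\<le>N. x(m,j)\<close>. Pascal's rule \<open>B(m+1,j) = 2 B(m,j) - C(m,j)\<close>, applied once
  or twice, turns the four double sums into \<open>X(m,n)\<close> for \<open>m = 2n, 2n+1\<close>, plus a harmonic
  tail coming from \<open>C(m+1,j) / C(m,j) = (m+1) / (m+1-j)\<close>.
  The ratios satisfy \<open>(m-j) x(m,j+1) = (j+1) x(m,j) + (m-j)\<close>, which telescopes to the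
  recurrence in the row index \<open>(m+1) X(m+1,N) = (m+2) X(m,N) - (N+1) x(m,N)\<close>.
  Two steps of it lead from \<open>X(2n+1,n)\<close> to \<open>X(2n+3,n+1)\<close> and give
  \<open>X(2n+1,n) = (n+1)(1 + \<Sum>k\<le>n. 1/(2k+1)) / 2\<close>; one step back, together with
  \<open>B(2n+1,n) = 4\<^sup>n\<close>, gives \<open>X(2n,n)\<close>.
\<close>

definition binomial_partial_sum :: "nat \<Rightarrow> nat \<Rightarrow> real" where
  "binomial_partial_sum m j = (\<Sum>i=0..j. real (m choose i))"

definition partial_sum_ratio :: "nat \<Rightarrow> nat \<Rightarrow> real" where
  "partial_sum_ratio m j = binomial_partial_sum m j / real (m choose j)"

definition ratio_sum :: "nat \<Rightarrow> nat \<Rightarrow> real" where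
  "ratio_sum m N = (\<Sum>j=0..N. partial_sum_ratio m j)"

definition odd_harm :: "nat \<Rightarrow> real" where
  "odd_harm n = (\<Sum>k=0..n. 1 / real (2*k+1))"

lemma binomial_partial_sum_Suc:
  "binomial_partial_sum m (Suc j) = binomial_partial_sum m j + real (m choose Suc j)"
  by (simp add: binomial_partial_sum_def)

lemma binomial_partial_sum_Suc_row:
  "binomial_partial_sum (Suc m) j = 2 * binomial_partial_sum m j - real (m choose j)"
  by (induction j) (simp_all add: binomial_partial_sum_def)

lemma binomial_partial_sum_middle: "binomial_partial_sum (2*n+1) n = 4^n"
proof (induction n)
  case 0
  then show ?case by (simp add: binomial_partial_sum_def)
next
  case (Suc n)
  have "(2*n+1) choose (n+1) = (2*n+1) choose n"
    using binomial_symmetric[of "n+1" "2*n+1"] by simp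
  then have "binomial_partial_sum (Suc (Suc (2*n+1))) (Suc n) = 4 * binomial_partial_sum (2*n+1) n"
    by (simp add: binomial_partial_sum_Suc_row binomial_partial_sum_Suc)
  then show ?case using Suc by simp
qed

lemma partial_sum_ratio_0 [simp]: "partial_sum_ratio m 0 = 1"
  by (simp add: partial_sum_ratio_def binomial_partial_sum_def)

lemma partial_sum_ratio_Suc:
  assumes "j < m"
  shows "(real m - real j) * partial_sum_ratio m (Suc j)
           = real (Suc j) * partial_sum_ratio m j + (real m - real j)"
proof -
  have "Suc j * (m choose Suc j) = (m - j) * (m choose j)"
    by (simp only: binomial_absorption binomial_absorb_comp)
  then have "real (Suc j) * real (m choose Suc j) = (real m - real j) * real (m choose j)"
    using assms by (metis of_nat_mult of_nat_diff less_imp_le)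
  moreover have "real (m choose j) > 0" "real (m choose Suc j) > 0"
    using assms by auto
  ultimately have absorb:
    "(real m - real j) / real (m choose Suc j) = real (Suc j) / real (m choose j)"
    by (simp add: field_simps)
  have "(real m - real j) * partial_sum_ratio m (Suc j)
          = (real m - real j) / real (m choose Suc j) * binomial_partial_sum m j + (real m - real j)"
    using \<open>real (m choose Suc j) > 0\<close>
    by (simp add: partial_sum_ratio_def binomial_partial_sum_Suc field_simps)
  then show ?thesis
    unfolding absorb by (simp add: partial_sum_ratio_def)
qed

lemma sum_weighted_partial_sum_ratio:
  "N \<le> m \<Longrightarrow> (\<Sum>j=0..N. (real m - 2 * real j) * partial_sum_ratio m j)
     = (\<Sum>j=0..N. real m + 1 - real j) - real (Suc N) * partial_sum_ratio m N"
proof (induction N)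
  case 0
  then show ?case by simp
next
  case (Suc N)
  then have IH: "(\<Sum>j=0..N. (real m - 2 * real j) * partial_sum_ratio m j)
                   = (\<Sum>j=0..N. real m + 1 - real j) - real (Suc N) * partial_sum_ratio m N"
    and step: "(real m - real N) * partial_sum_ratio m (Suc N)
                 = real (Suc N) * partial_sum_ratio m N + (real m - real N)"
    by (simp_all add: partial_sum_ratio_Suc)
  have "(\<Sum>j=0..Suc N. (real m - 2 * real j) * partial_sum_ratio m j)
          = (\<Sum>j=0..N. (real m - 2 * real j) * partial_sum_ratio m j)
            + (real m - 2 * real (Suc N)) * partial_sum_ratio m (Suc N)"
    by simp
  also have "\<dots> = (\<Sum>j=0..Suc N. real m + 1 - real j)
                   - real (Suc (Suc N)) * partial_sum_ratio m (Suc N)"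
    using IH step by (simp add: algebra_simps)
  finally show ?case .
qed

lemma partial_sum_ratio_Suc_row:
  assumes "j \<le> m"
  shows "partial_sum_ratio (Suc m) j
           = (real m + 1 - real j) / (real m + 1) * (2 * partial_sum_ratio m j - 1)"
proof -
  have "(Suc m - j) * (Suc m choose j) = Suc m * (m choose j)"
    using binomial_absorb_comp[of "Suc m" j] by (simp only: diff_Suc_1)
  then have "real (Suc m - j) * real (Suc m choose j) = real (Suc m) * real (m choose j)"
    by (simp only: of_nat_mult [symmetric])
  then have "(real m + 1 - real j) * real (Suc m choose j) = (real m + 1) * real (m choose j)"
    using assms by (simp add: of_nat_diff add.commute)
  moreover have "(real m + 1) * real (m choose j) \<noteq> 0" "real (Suc m choose j) \<noteq> 0"
    using assms by auto
  ultimately have inverse_binomial: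
    "1 / real (Suc m choose j) = (real m + 1 - real j) / ((real m + 1) * real (m choose j))"
    by (simp add: field_simps)
  have "partial_sum_ratio (Suc m) j
          = (2 * binomial_partial_sum m j - real (m choose j)) * (1 / real (Suc m choose j))"
    by (simp add: partial_sum_ratio_def binomial_partial_sum_Suc_row)
  also have "\<dots> = (real m + 1 - real j) / (real m + 1) * (2 * partial_sum_ratio m j - 1)"
    unfolding inverse_binomial using assms by (simp add: partial_sum_ratio_def field_simps)
  finally show ?thesis .
qed

lemma ratio_sum_Suc_row:
  assumes "N \<le> m"
  shows "(real m + 1) * ratio_sum (Suc m) N
           = (real m + 2) * ratio_sum m N - real (Suc N) * partial_sum_ratio m N"
proof -
  have "(real m + 1) * ratio_sum (Suc m) N
          = (\<Sum>j=0..N. (real m + 1 - real j) * (2 * partial_sum_ratio m j - 1))"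
    unfolding ratio_sum_def sum_distrib_left
    using assms by (intro sum.cong) (simp_all add: partial_sum_ratio_Suc_row)
  also have "\<dots> = (\<Sum>j=0..N. (real m - 2 * real j) * partial_sum_ratio m j
                       + (real m + 2) * partial_sum_ratio m j - (real m + 1 - real j))"
    by (intro sum.cong) (simp_all add: algebra_simps)
  also have "\<dots> = (\<Sum>j=0..N. (real m - 2 * real j) * partial_sum_ratio m j)
                   + (real m + 2) * ratio_sum m N - (\<Sum>j=0..N. real m + 1 - real j)"
    by (simp add: ratio_sum_def sum_distrib_left sum.distrib sum_subtractf)
  finally show ?thesis
    using sum_weighted_partial_sum_ratio[OF assms] by simp
qed

lemma ratio_sum_odd_middle_Suc:
  "(real n + 1) * ratio_sum (2*n+3) (n+1)
     = (real n + 2) * ratio_sum (2*n+1) n + (real n + 1) * (real n + 2) / (2 * (2 * real n + 3))"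
proof -
  define X where "X = ratio_sum (2*n+1) n"
  define x where "x = partial_sum_ratio (2*n+1) (n+1)"
  define Z where "Z = ratio_sum (2*n+2) (n+1)"
  have "ratio_sum (2*n+1) (n+1) = X + x"
    by (simp add: X_def x_def ratio_sum_def)
  then have Z: "(2 * real n + 2) * Z = (2 * real n + 3) * X + (real n + 1) * x"
    using ratio_sum_Suc_row[of "n+1" "2*n+1"] by (simp add: Z_def x_def algebra_simps)
  have "partial_sum_ratio (Suc (2*n+1)) (n+1)
          = (real (2*n+1) + 1 - real (n+1)) / (real (2*n+1) + 1) * (2 * x - 1)"
    unfolding x_def by (rule partial_sum_ratio_Suc_row) simp
  also have "(real (2*n+1) + 1 - real (n+1)) / (real (2*n+1) + 1) = 1/2"
    by (simp add: field_simps)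
  finally have half: "partial_sum_ratio (2*n+2) (n+1) = x - 1/2"
    by simp
  \<comment> \<open>so the boundary term \<open>x\<close> cancels between the two steps\<close>
  have step: "(2 * real n + 3) * ratio_sum (2*n+3) (n+1)
                = (2 * real n + 4) * Z - (real n + 2) * (x - 1/2)"
    using ratio_sum_Suc_row[of "n+1" "2*n+2", unfolded half]
    by (simp add: Z_def numeral_3_eq_3 algebra_simps)
  have "(2 * real n + 3) * ((real n + 1) * ratio_sum (2*n+3) (n+1))
          = (real n + 1) * ((2 * real n + 3) * ratio_sum (2*n+3) (n+1))"
    by (simp only: ac_simps)
  also have "\<dots> = (real n + 2) * ((2 * real n + 2) * Z)
                   - (real n + 1) * (real n + 2) * (x - 1/2)"
    unfolding step by (simp add: field_simps)
  also have "\<dots> = (2 * real n + 3)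
                   * ((real n + 2) * X + (real n + 1) * (real n + 2) / (2 * (2 * real n + 3)))"
    unfolding Z by (simp add: field_simps)
  finally show ?thesis
    unfolding X_def by simp
qed

lemma ratio_sum_odd_middle: "ratio_sum (2*n+1) n = (real n + 1) / 2 * (1 + odd_harm n)"
proof (induction n)
  case 0
  then show ?case by (simp add: ratio_sum_def odd_harm_def)
next
  case (Suc n)
  have "(real n + 1) * ratio_sum (2*n+3) (n+1)
          = (real n + 1) * ((real n + 2) / 2 * (1 + (odd_harm n + 1 / (2 * real n + 3))))"
    unfolding ratio_sum_odd_middle_Suc Suc.IH by (simp add: field_simps)
  then show ?case
    by (simp add: odd_harm_def eval_nat_numeral add.commute)
qed

lemma partial_sum_ratio_middle: "partial_sum_ratio (2*n) n = (4^n / real ((2*n) choose n) + 1) / 2"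
proof -
  have "4^n = 2 * binomial_partial_sum (2*n) n - real ((2*n) choose n)"
    using binomial_partial_sum_Suc_row[of "2*n" n] binomial_partial_sum_middle[of n] by simp
  moreover have "real ((2*n) choose n) > 0"
    by simp
  ultimately show ?thesis
    by (simp add: partial_sum_ratio_def field_simps)
qed

lemma ratio_sum_even_middle:
  "ratio_sum (2*n) n
     = 4^n / real ((2*n) choose n) / 4 + (real n + 1) / 2 + (2 * real n + 1) / 4 * odd_harm n"
proof -
  have "(2 * real n + 2) * ratio_sum (2*n) n
          = (2 * real n + 1) * ratio_sum (2*n+1) n + (real n + 1) * partial_sum_ratio (2*n) n"
    using ratio_sum_Suc_row[of n "2*n"] by (simp add: algebra_simps)
  also have "\<dots> = (2 * real n + 2)
                   * (4^n / real ((2*n) choose n) / 4 + (real n + 1) / 2 + (2 * real n + 1) / 4 * odd_harm n)"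
    unfolding ratio_sum_odd_middle partial_sum_ratio_middle by (simp add: field_simps)
  finally show ?thesis
    by simp
qed

lemma harm_even_split: "harm (2*n+2) = odd_harm n + harm (n+1) / (2::real)"
proof (induction n)
  case 0
  then show ?case by (simp add: odd_harm_def harm_Suc harm_expand)
next
  case (Suc n)
  have odd_harm_Suc: "odd_harm (Suc n) = odd_harm n + 1 / (2 * real n + 3)"
    by (simp add: odd_harm_def add_ac)
  have "harm (2 * Suc n + 2) = harm (2*n+2) + 1 / (2 * real n + 3) + 1 / (2 * real n + 4 :: real)"
    by (simp add: eval_nat_numeral harm_Suc divide_inverse add_ac)
  also have "1 / (2 * real n + 4) = 1 / (real n + 2) / 2"
    by simp
  also have "harm (2*n+2) + 1 / (2 * real n + 3) + 1 / (real n + 2) / 2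
               = odd_harm (Suc n) + (harm (n+1) + 1 / (real n + 2)) / 2"
    unfolding Suc.IH odd_harm_Suc by (simp add: add_divide_distrib)
  also have "harm (n+1) + 1 / (real n + 2) = harm (Suc n + 1)"
    by (simp add: harm_Suc divide_inverse add_ac)
  finally show ?case .
qed

lemma harm_odd_split: "harm (2*n+1) = odd_harm n + harm n / (2::real)"
proof -
  have "harm (2*n+1) = harm (2*n+2) - 1 / (2 * real n + 2 :: real)"
    by (simp add: eval_nat_numeral harm_Suc divide_inverse add_ac)
  also have "\<dots> = odd_harm n + (harm (n+1) - 1 / (real n + 1)) / 2"
    unfolding harm_even_split by (simp add: field_simps)
  also have "harm (n+1) - 1 / (real n + 1) = harm n"
    by (simp add: harm_Suc divide_inverse add_ac)
  finally show ?thesis .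
qed

lemma sum_inverse_eq_harm_diff:
  "n \<le> m \<Longrightarrow> (\<Sum>j=0..n. 1 / real (Suc m - j)) = harm (Suc m) - (harm (m - n) :: real)"
proof (induction n)
  case 0
  then show ?case by (simp add: harm_Suc divide_inverse)
next
  case (Suc n)
  then have "m - n = Suc (m - Suc n)"
    by simp
  with Suc show ?case
    by (simp add: harm_Suc divide_inverse)
qed

lemma partial_sum_Suc_row_div_binomial:
  "j \<le> m \<Longrightarrow> binomial_partial_sum (Suc m) j / real (m choose j) = 2 * partial_sum_ratio m j - 1"
  by (simp add: binomial_partial_sum_Suc_row partial_sum_ratio_def field_simps)

lemma partial_sum_Suc_Suc_row_div_binomial:
  assumes "j \<le> m"
  shows "binomial_partial_sum (Suc (Suc m)) j / real (m choose j)
           = 4 * partial_sum_ratio m j - 2 - (real m + 1) / real (Suc m - j)"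
proof -
  have "real (Suc m - j) * real (Suc m choose j) = real (Suc m) * real (m choose j)"
    using binomial_absorb_comp[of "Suc m" j] by (simp only: diff_Suc_1 flip: of_nat_mult)
  moreover have "real (m choose j) > 0" "real (Suc m - j) > 0"
    using assms by auto
  ultimately have "real (Suc m choose j) / real (m choose j) = (real m + 1) / real (Suc m - j)"
    by (simp add: field_simps)
  moreover have "binomial_partial_sum (Suc (Suc m)) j
                   = 4 * binomial_partial_sum m j - 2 * real (m choose j) - real (Suc m choose j)"
    by (simp add: binomial_partial_sum_Suc_row)
  ultimately show ?thesis
    using \<open>real (m choose j) > 0\<close> by (simp add: partial_sum_ratio_def diff_divide_distrib)
qed

lemma double_sum_Suc_row:
  assumes "n \<le> m"
  shows "(\<Sum>j=0..n. \<Sum>i=0..j. real (Suc m choose i) / real (m choose j))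
           = 2 * ratio_sum m n - (real n + 1)"
proof -
  have "(\<Sum>j=0..n. \<Sum>i=0..j. real (Suc m choose i) / real (m choose j))
          = (\<Sum>j=0..n. 2 * partial_sum_ratio m j - 1)"
    using assms
    by (intro sum.cong) (simp_all add: partial_sum_Suc_row_div_binomial
                  flip: sum_divide_distrib binomial_partial_sum_def)
  then show ?thesis
    by (simp add: ratio_sum_def sum_subtractf sum_distrib_left)
qed

lemma double_sum_Suc_Suc_row:
  assumes "n \<le> m"
  shows "(\<Sum>j=0..n. \<Sum>i=0..j. real (Suc (Suc m) choose i) / real (m choose j))
           = 4 * ratio_sum m n - 2 * (real n + 1) - (real m + 1) * (harm (Suc m) - harm (m - n))"
proof -
  have "(\<Sum>j=0..n. \<Sum>i=0..j. real (Suc (Suc m) choose i) / real (m choose j))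
          = (\<Sum>j=0..n. 4 * partial_sum_ratio m j - 2 - (real m + 1) * (1 / real (Suc m - j)))"
    using assms
    by (intro sum.cong) (simp_all add: partial_sum_Suc_Suc_row_div_binomial
                  flip: sum_divide_distrib binomial_partial_sum_def)
  also have "\<dots> = 4 * ratio_sum m n - 2 * (real n + 1) - (real m + 1) * (\<Sum>j=0..n. 1 / real (Suc m - j))"
    by (simp add: ratio_sum_def sum_subtractf sum_distrib_left)
  finally show ?thesis
    using sum_inverse_eq_harm_diff[OF assms] by simp
qed

theorem corollary2:
  fixes n :: nat
  shows "((\<Sum>j=0..n. \<Sum>i=0..j. real ((2*n+2) choose i) / real ((2*n+1) choose j))
           = real (n+1) * (\<Sum>k=0..n. 1 / real (2*k+1))
       \<and> real (n+1) * (\<Sum>k=0..n. 1 / real (2*k+1))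
           = real (n+1) * (harm (2*n+1) - harm n / 2))
     \<and> ((\<Sum>j=0..n. \<Sum>i=0..j. real ((2*n+3) choose i) / real ((2*n+1) choose j))
           = real (n+1) * harm (n+1))
     \<and> ((\<Sum>j=0..n. \<Sum>i=0..j. real ((2*n+1) choose i) / real ((2*n) choose j))
           = (2::real)^(2*n) / 2 / real ((2*n) choose n)
             + (real n + 1/2) * (harm (2*n+1) - harm n / 2))
     \<and> ((\<Sum>j=0..n. \<Sum>i=0..j. real ((2*n+2) choose i) / real ((2*n) choose j))
           = (2::real)^(2*n) / real ((2*n) choose n) + (real n + 1/2) * harm n)"
proof -
  have s1: "(\<Sum>j=0..n. \<Sum>i=0..j. real ((2*n+2) choose i) / real ((2*n+1) choose j))
              = 2 * ratio_sum (2*n+1) n - (real n + 1)"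
    using double_sum_Suc_row[of n "2*n+1"] by simp
  have s2: "(\<Sum>j=0..n. \<Sum>i=0..j. real ((2*n+3) choose i) / real ((2*n+1) choose j))
              = 4 * ratio_sum (2*n+1) n - 2 * (real n + 1) - (2 * real n + 2) * (harm (2*n+2) - harm (n+1))"
    using double_sum_Suc_Suc_row[of n "2*n+1"] by (simp add: eval_nat_numeral)
  have s3: "(\<Sum>j=0..n. \<Sum>i=0..j. real ((2*n+1) choose i) / real ((2*n) choose j))
              = 2 * ratio_sum (2*n) n - (real n + 1)"
    using double_sum_Suc_row[of n "2*n"] by simp
  have s4: "(\<Sum>j=0..n. \<Sum>i=0..j. real ((2*n+2) choose i) / real ((2*n) choose j))
              = 4 * ratio_sum (2*n) n - 2 * (real n + 1) - (2 * real n + 1) * (harm (2*n+1) - harm n)"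
    using double_sum_Suc_Suc_row[of n "2*n"] by (simp add: eval_nat_numeral)
  have "(2::real)^(2*n) = 4^n"
    by (simp add: power_mult)
  then show ?thesis
    unfolding s1 s2 s3 s4 ratio_sum_odd_middle ratio_sum_even_middle harm_even_split harm_odd_split
      odd_harm_def [symmetric]
    by (simp add: field_simps)
qed

end
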